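(* Let $k\geq 3$, $\chi\geq 2$, $t\geq k-1$ and $n\geq 3(k-1)$ be integers with $n\equiv 1\pmod{k-1}$. Let $H$ be the $k$-graph on vertex set $A_1\sqcup\dots\sqcup A_\chi$, where $|A_i|>(\chi-1)(k-2)+\tau(k-1,t)$ for all $i\in[\chi-1]$ and $|A_\chi|=t$, whose edges are all $k$-subsets $e$ of the vertex set such that $|e\cap A_i|=k-1$ for some $i\in[\chi]$. Then $R(P^{(k)}_{n,1},H)\geq (\chi-1)(n-1)+\tau(k-1,t)-2k+3$.
   Context: A $k$-graph is a $k$-uniform hypergraph. $R(G,H)$ is the least $N$ such that every red/blue colouring of the edges of $K^{(k)}_N$ contains a red copy of $G$ or a blue copy of $H$. The loose path $P^{(k)}_{n,1}$ ($n=q(k-1)+1$) has vertices $v_1,\dots,v_n$ and edges $\{v_{(i-1)(k-1)+1},\dots,v_{i(k-1)+1}\}$, $i\in[q]$. For integers $j,\alpha\ge1$, $\tau(j,\alpha)$ is the largest $N$ such that some $j$-uniform hypergraph on $N$ vertices has independence number less than $\alpha$ and no two edges meeting in exactly one vertex. *)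

theory Defs
  imports Main
begin

definition has_copy :: "'a set \<Rightarrow> 'a set set \<Rightarrow> 'b set \<Rightarrow> 'b set set \<Rightarrow> bool" where
  "has_copy VG EG W F \<longleftrightarrow>
     (\<exists>f. inj_on f VG \<and> f ` VG \<subseteq> W \<and> (\<forall>e\<in>EG. f ` e \<in> F))"

definition complete_kgraph_edges :: "nat \<Rightarrow> nat \<Rightarrow> nat set set" where
  "complete_kgraph_edges k N = {e. e \<subseteq> {0..<N} \<and> card e = k}"

definition ramsey_number :: "nat \<Rightarrow> 'a set \<Rightarrow> 'a set set \<Rightarrow> 'b set \<Rightarrow> 'b set set \<Rightarrow> nat" where
  "ramsey_number k VG EG VH EH =
     (LEAST N. \<forall>c :: nat set \<Rightarrow> bool.
        has_copy VG EG {0..<N} {e \<in> complete_kgraph_edges k N. c e} \<or>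
        has_copy VH EH {0..<N} {e \<in> complete_kgraph_edges k N. \<not> c e})"

text \<open>Loose path P^(k)_{n,1} with vertices 1..n, n = q(k-1)+1.\<close>
definition loose_path_vertices :: "nat \<Rightarrow> nat set" where
  "loose_path_vertices n = {1..n}"

definition loose_path_edges :: "nat \<Rightarrow> nat \<Rightarrow> nat set set" where
  "loose_path_edges k n =
     (\<lambda>i. {(i - 1) * (k - 1) + 1 .. i * (k - 1) + 1}) ` {1 .. (n - 1) div (k - 1)}"

definition tau :: "nat \<Rightarrow> nat \<Rightarrow> nat" where
  "tau j \<alpha> = (GREATEST N. \<exists>E :: nat set set.
      E \<subseteq> {e. e \<subseteq> {0..<N} \<and> card e = j} \<and>
      (\<forall>I. I \<subseteq> {0..<N} \<and> (\<forall>e\<in>E. \<not> e \<subseteq> I) \<longrightarrow> card I < \<alpha>) \<and>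
      (\<forall>e\<in>E. \<forall>e'\<in>E. e \<noteq> e' \<longrightarrow> card (e \<inter> e') \<noteq> 1))"

end

theory Submission
  imports Defs "HOL-Library.Ramsey" "HOL-Library.FuncSet"
begin

text \<open>
  Let \<open>\<tau> = tau (k - 1) t\<close> and \<open>G\<close> a \<open>(k - 1)\<close>-graph on \<open>\<tau>\<close> vertices without independent
  \<open>t\<close>-sets and without two edges meeting in exactly one vertex. Cut
  \<open>N = \<tau> + (n + 1 - 2k) + (\<chi> - 2)(n - 1)\<close> vertices into block 0 of size \<open>\<tau>\<close>, carrying \<open>G\<close>,
  block 1 of size \<open>n + 1 - 2k\<close> and \<open>\<chi> - 2\<close> blocks of size \<open>n - 1\<close>. Colour an edge red if it
  lies inside one block other than block 0, or if it is an edge of \<open>G\<close> plus a vertex of block 1.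

  A red loose path cannot leave its class, where blocks 0 and 1 form one class. A block of size
  \<open>n - 1\<close> is too small for it. In blocks 0 and 1 only the first and the last edge of the path can
  meet block 0, since at an inner joint two edges of \<open>G\<close> would meet in one vertex; so the path has
  at most \<open>2(k - 1) + (n + 1 - 2k) = n - 1\<close> vertices.

  In a blue copy of \<open>H\<close>, pigeonhole gives each part \<open>A i\<close>, \<open>i < \<chi>\<close>, some \<open>k - 1\<close> vertices
  inside one of the blocks \<open>1, \<dots>, \<chi> - 1\<close>. Different parts get different blocks, else
  these vertices plus one vertex of the other part form a red edge of \<open>H\<close>. Hence \<open>A \<chi>\<close> is mapped
  into block 0, where its \<open>t\<close> vertices contain an edge of \<open>G\<close>; with a block-1 vertex of the
  part sent to block 1 this is a red edge of \<open>H\<close>.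
\<close>

section \<open>Ramsey numbers and the function tau\<close>

lemma ramsey_two_colours:
  obtains N :: nat where
    "\<And>c :: nat set \<Rightarrow> bool. \<exists>H\<subseteq>{0..<N}.
       (card H = a \<and> (\<forall>e\<subseteq>H. card e = r \<longrightarrow> c e)) \<or>
       (card H = b \<and> (\<forall>e\<subseteq>H. card e = r \<longrightarrow> \<not> c e))"
proof -
  obtain N :: nat where N: "partn_lst {..<N} [a, b] r"
    using ramsey_full by blast
  have "\<exists>H\<subseteq>{0..<N}. (card H = a \<and> (\<forall>e\<subseteq>H. card e = r \<longrightarrow> c e)) \<or>
          (card H = b \<and> (\<forall>e\<subseteq>H. card e = r \<longrightarrow> \<not> c e))" for c :: "nat set \<Rightarrow> bool"
  proof -
    have "(\<lambda>e. if c e then 0 else 1) \<in> [{..<N}]\<^bsup>r\<^esup> \<rightarrow> {..<length [a, b]}"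
      by auto
    then obtain i H where i: "i < 2" and H: "H \<in> nsets {..<N} ([a, b] ! i)"
      and mono: "(\<lambda>e. if c e then 0 else 1) ` [H]\<^bsup>r\<^esup> \<subseteq> {i}"
      using partn_lstE[OF N] by (metis length_Cons list.size(3) numeral_2_eq_2)
    have "c e \<longleftrightarrow> i = 0" if "e \<subseteq> H" "card e = r" for e
    proof -
      have "finite e" using H that(1) finite_subset by (auto simp: nsets_def)
      then have "e \<in> [H]\<^bsup>r\<^esup>" using that by (simp add: nsets_def)
      then show ?thesis using mono by (auto split: if_splits)
    qed
    moreover have "H \<subseteq> {0..<N}" "card H = [a, b] ! i" using H by (auto simp: nsets_def)
    ultimately show ?thesis using i by (cases i) auto
  qed
  then show thesis using that by blast
qed

lemma two_subsets_meeting_in_one_point: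
  assumes "finite H" "card H = 2 * j - 1" "j \<ge> 2"
  obtains e e' where "e \<subseteq> H" "e' \<subseteq> H" "card e = j" "card e' = j" "e \<noteq> e'" "card (e \<inter> e') = 1"
proof -
  obtain x where x: "x \<in> H" using assms by fastforce
  have "card (H - {x}) = 2 * (j - 1)" using assms x by simp
  then obtain B where B: "B \<subseteq> H - {x}" "card B = j - 1"
    by (metis obtain_subset_with_card_n le_add1 mult_2)
  have B': "card (H - {x} - B) = j - 1"
    using B assms \<open>card (H - {x}) = 2 * (j - 1)\<close> by (simp add: card_Diff_subset finite_subset)
  have fin: "finite B" "finite (H - {x} - B)" using B assms(1) finite_subset by auto
  show thesis
  proof (rule that[of "insert x B" "insert x (H - {x} - B)"])
    show "card (insert x B) = j" "card (insert x (H - {x} - B)) = j"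
      using B B' fin assms(3) by (auto simp: card_insert_if)
    have meet: "insert x B \<inter> insert x (H - {x} - B) = {x}" by blast
    then show "card (insert x B \<inter> insert x (H - {x} - B)) = 1" by simp
    show "insert x B \<noteq> insert x (H - {x} - B)"
    proof
      assume "insert x B = insert x (H - {x} - B)"
      then have "insert x B = {x}" using meet by (metis Int_absorb)
      then have "card (insert x B) = card {x}" by (rule arg_cong)
      then show False using \<open>card (insert x B) = j\<close> assms(3) by simp
    qed
  qed (use B x in auto)
qed

lemma pigeonhole_large_fibre:
  assumes "finite Y" "h \<in> Y \<rightarrow> {1..p}" "p * r < card Y"
  obtains b where "b \<in> {1..p}" "r < card {y \<in> Y. h y = b}"
proof -
  have "Y \<noteq> {}" using assms(3) by auto
  then have "{1..p} \<noteq> {}" using assms(2) by blast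
  then obtain b where b: "b \<in> {1..p}" and "card Y \<le> card (h -` {b} \<inter> Y) * card {1..p}"
    using pigeonhole_card[OF assms(2,1) finite_atLeastAtMost] by blast
  moreover have "h -` {b} \<inter> Y = {y \<in> Y. h y = b}" by auto
  ultimately have "card Y \<le> p * card {y \<in> Y. h y = b}" by (simp add: mult.commute)
  then have "p * r < p * card {y \<in> Y. h y = b}" using assms(3) by linarith
  then show thesis using that[OF b] by simp
qed

lemma has_copy_mono:
  assumes "has_copy V E W F" "W \<subseteq> W'" "F \<subseteq> F'"
  shows "has_copy V E W' F'"
proof -
  obtain f where "inj_on f V" "f ` V \<subseteq> W" "\<forall>e\<in>E. f ` e \<in> F"
    using assms(1) unfolding has_copy_def by blast
  then have "inj_on f V \<and> f ` V \<subseteq> W' \<and> (\<forall>e\<in>E. f ` e \<in> F')"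
    using assms(2,3) by blast
  then show ?thesis unfolding has_copy_def by blast
qed

lemma has_copy_in_clique:
  assumes "finite V" "\<forall>e\<in>E. e \<subseteq> V \<and> card e = k"
    and "H \<subseteq> {0..<N}" "card H = card V" "\<forall>e\<subseteq>H. card e = k \<longrightarrow> P e"
  shows "has_copy V E {0..<N} {e \<in> complete_kgraph_edges k N. P e}"
proof -
  obtain f where "bij_betw f V H"
    using finite_same_card_bij[OF assms(1) finite_subset[OF assms(3) finite_atLeastLessThan]] assms(4)
    by metis
  then have inj: "inj_on f V" and im: "f ` V = H" by (simp_all add: bij_betw_def)
  have "f ` e \<in> {e \<in> complete_kgraph_edges k N. P e}" if "e \<in> E" for e
  proof -
    have "e \<subseteq> V" "card e = k" using assms(2) that by auto
    then have "f ` e \<subseteq> H" "card (f ` e) = k"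
      using im card_image[OF inj_on_subset[OF inj]] by auto
    then show ?thesis using assms(3,5) by (auto simp: complete_kgraph_edges_def)
  qed
  then show ?thesis using inj im assms(3) unfolding has_copy_def by blast
qed

text \<open>Ramsey's theorem guarantees that the \<open>LEAST\<close> defining \<open>ramsey_number\<close> is attained.\<close>

lemma less_ramsey_number:
  fixes VG :: "'a set" and VH :: "'b set"
  assumes "finite VG" "\<forall>e\<in>EG. e \<subseteq> VG \<and> card e = k"
    and "finite VH" "\<forall>e\<in>EH. e \<subseteq> VH \<and> card e = k"
    and no_red: "\<not> has_copy VG EG {0..<N} {e \<in> complete_kgraph_edges k N. c e}"
    and no_blue: "\<not> has_copy VH EH {0..<N} {e \<in> complete_kgraph_edges k N. \<not> c e}"
  shows "N < ramsey_number k VG EG VH EH"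
proof -
  define Q where "Q = (\<lambda>M. \<forall>c :: nat set \<Rightarrow> bool.
        has_copy VG EG {0..<M} {e \<in> complete_kgraph_edges k M. c e} \<or>
        has_copy VH EH {0..<M} {e \<in> complete_kgraph_edges k M. \<not> c e})"
  obtain R where R: "\<And>c :: nat set \<Rightarrow> bool. \<exists>H\<subseteq>{0..<R}.
       (card H = card VG \<and> (\<forall>e\<subseteq>H. card e = k \<longrightarrow> c e)) \<or>
       (card H = card VH \<and> (\<forall>e\<subseteq>H. card e = k \<longrightarrow> \<not> c e))"
    using ramsey_two_colours[where a = "card VG" and b = "card VH" and r = k] by blast
  have "Q R"
    unfolding Q_def
  proof
    fix c :: "nat set \<Rightarrow> bool"
    obtain H where H: "H \<subseteq> {0..<R}"
      and "(card H = card VG \<and> (\<forall>e\<subseteq>H. card e = k \<longrightarrow> c e)) \<or>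
           (card H = card VH \<and> (\<forall>e\<subseteq>H. card e = k \<longrightarrow> \<not> c e))"
      using R[of c] by blast
    then show "has_copy VG EG {0..<R} {e \<in> complete_kgraph_edges k R. c e} \<or>
        has_copy VH EH {0..<R} {e \<in> complete_kgraph_edges k R. \<not> c e}"
      using has_copy_in_clique[OF assms(1,2) H] has_copy_in_clique[OF assms(3,4) H] by metis
  qed
  then have "Q (ramsey_number k VG EG VH EH)"
    unfolding ramsey_number_def Q_def[symmetric] by (rule LeastI)
  moreover have "\<not> Q M" if "M \<le> N" for M
  proof
    have W: "{0..<M} \<subseteq> {0..<N}" using that by simp
    have F: "{e \<in> complete_kgraph_edges k M. P e} \<subseteq> {e \<in> complete_kgraph_edges k N. P e}"
      for P using that by (auto simp: complete_kgraph_edges_def)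
    assume "Q M"
    then consider "has_copy VG EG {0..<M} {e \<in> complete_kgraph_edges k M. c e}"
      | "has_copy VH EH {0..<M} {e \<in> complete_kgraph_edges k M. \<not> c e}"
      unfolding Q_def by blast
    then show False
    proof cases
      case 1
      from has_copy_mono[OF this W F] no_red show False by contradiction
    next
      case 2
      from has_copy_mono[OF this W F] no_blue show False by contradiction
    qed
  qed
  ultimately show ?thesis using not_le by blast
qed

definition tau_witness :: "nat \<Rightarrow> nat \<Rightarrow> nat \<Rightarrow> nat set set \<Rightarrow> bool" where
  "tau_witness j \<alpha> N E \<longleftrightarrow>
     E \<subseteq> {e. e \<subseteq> {0..<N} \<and> card e = j} \<and>
     (\<forall>I. I \<subseteq> {0..<N} \<and> (\<forall>e\<in>E. \<not> e \<subseteq> I) \<longrightarrow> card I < \<alpha>) \<and>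
     (\<forall>e\<in>E. \<forall>e'\<in>E. e \<noteq> e' \<longrightarrow> card (e \<inter> e') \<noteq> 1)"

text \<open>Since \<open>tau\<close> is defined by \<open>GREATEST\<close>, its defining property needs a bound on \<open>N\<close>:
  a \<open>(2j - 1)\<close>-set all of whose \<open>j\<close>-subsets are edges contains two edges meeting in one vertex,
  so Ramsey's theorem bounds \<open>N\<close>.\<close>

lemma tau_witness_bounded:
  assumes "j \<ge> 2"
  shows "\<exists>R. \<forall>N E. tau_witness j \<alpha> N E \<longrightarrow> N \<le> R"
proof -
  obtain R where R: "\<And>c :: nat set \<Rightarrow> bool. \<exists>H\<subseteq>{0..<R}.
       (card H = 2 * j - 1 \<and> (\<forall>e\<subseteq>H. card e = j \<longrightarrow> c e)) \<or>
       (card H = \<alpha> \<and> (\<forall>e\<subseteq>H. card e = j \<longrightarrow> \<not> c e))"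
    using ramsey_two_colours[where a = "2 * j - 1" and b = \<alpha> and r = j] by blast
  have "N \<le> R" if "tau_witness j \<alpha> N E" for N E
  proof (rule ccontr)
    assume "\<not> N \<le> R"
    note witness = that[unfolded tau_witness_def]
    have E: "E \<subseteq> {e. e \<subseteq> {0..<N} \<and> card e = j}"
      using witness by (rule conjunct1)
    have indep: "\<forall>I. I \<subseteq> {0..<N} \<and> (\<forall>e\<in>E. \<not> e \<subseteq> I) \<longrightarrow> card I < \<alpha>"
      using witness by (rule conjunct1[OF conjunct2])
    have linear: "\<forall>e\<in>E. \<forall>e'\<in>E. e \<noteq> e' \<longrightarrow> card (e \<inter> e') \<noteq> 1"
      using witness by (rule conjunct2[OF conjunct2])
    obtain H where HR: "H \<subseteq> {0..<R}"
      and "(card H = 2 * j - 1 \<and> (\<forall>e\<subseteq>H. card e = j \<longrightarrow> e \<in> E)) \<or>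
           (card H = \<alpha> \<and> (\<forall>e\<subseteq>H. card e = j \<longrightarrow> e \<notin> E))"
      using R[of "\<lambda>e. e \<in> E"] by blast
    moreover have H: "H \<subseteq> {0..<N}" using HR \<open>\<not> N \<le> R\<close> by auto
    ultimately consider "card H = 2 * j - 1" "\<forall>e\<subseteq>H. card e = j \<longrightarrow> e \<in> E"
      | "card H = \<alpha>" "\<forall>e\<subseteq>H. card e = j \<longrightarrow> e \<notin> E" by blast
    then show False
    proof cases
      case 1
      obtain e e' where "e \<subseteq> H" "e' \<subseteq> H" "card e = j" "card e' = j" "e \<noteq> e'" "card (e \<inter> e') = 1"
        using two_subsets_meeting_in_one_point[OF finite_subset[OF H finite_atLeastLessThan] 1(1) assms] .
      then have "e \<in> E" "e' \<in> E" using 1(2) by simp_all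
      then show False using linear \<open>e \<noteq> e'\<close> \<open>card (e \<inter> e') = 1\<close> by blast
    next
      case 2
      then have "\<forall>e\<in>E. \<not> e \<subseteq> H" using E by blast
      then have "card H < \<alpha>" using indep H by blast
      then show False using 2(1) by simp
    qed
  qed
  then show ?thesis by blast
qed

lemma tau_attained:
  assumes "j \<ge> 2" "\<alpha> \<ge> 1"
  obtains E :: "nat set set" where
    "E \<subseteq> {e. e \<subseteq> {0..<tau j \<alpha>} \<and> card e = j}"
    "\<forall>I. I \<subseteq> {0..<tau j \<alpha>} \<and> (\<forall>e\<in>E. \<not> e \<subseteq> I) \<longrightarrow> card I < \<alpha>"
    "\<forall>e\<in>E. \<forall>e'\<in>E. e \<noteq> e' \<longrightarrow> card (e \<inter> e') \<noteq> 1"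
proof -
  define P where "P N \<longleftrightarrow> (\<exists>E. tau_witness j \<alpha> N E)" for N
  obtain R where "\<forall>N E. tau_witness j \<alpha> N E \<longrightarrow> N \<le> R"
    using tau_witness_bounded[OF assms(1)] by blast
  then have "\<And>N. P N \<Longrightarrow> N \<le> R" unfolding P_def by blast
  moreover have "P 0" unfolding P_def tau_witness_def using assms(2) by (intro exI[of _ "{}"]) auto
  ultimately have "P (Greatest P)" using GreatestI_nat by blast
  moreover have "tau j \<alpha> = Greatest P" unfolding tau_def P_def tau_witness_def ..
  ultimately have "P (tau j \<alpha>)" by simp
  then show thesis unfolding P_def tau_witness_def using that by (elim exE conjE)
qed

section \<open>Loose paths\<close>

definition loose_path_edge :: "nat \<Rightarrow> nat \<Rightarrow> nat set" where
  "loose_path_edge k i = {(i - 1) * (k - 1) + 1 .. i * (k - 1) + 1}"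

lemma loose_path_edges_eq:
  assumes "k \<ge> 2"
  shows "loose_path_edges k (q * (k - 1) + 1) = loose_path_edge k ` {1..q}"
  using assms by (simp add: loose_path_edges_def loose_path_edge_def)

lemma card_loose_path_edge: "i \<ge> 1 \<Longrightarrow> k \<ge> 1 \<Longrightarrow> card (loose_path_edge k i) = k"
  by (cases i) (auto simp: loose_path_edge_def)

lemma loose_path_edge_subset:
  "i \<in> {1..q} \<Longrightarrow> loose_path_edge k i \<subseteq> {1..q * (k - 1) + 1}"
  by (auto simp: loose_path_edge_def intro: order_trans[OF _ mult_le_mono1])

lemma loose_path_edge_Int_Suc:
  "i \<ge> 1 \<Longrightarrow> loose_path_edge k i \<inter> loose_path_edge k (Suc i) = {i * (k - 1) + 1}"
  by (cases i) (auto simp: loose_path_edge_def)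

lemma loose_path_edge_ends:
  "(i - 1) * (k - 1) + 1 \<in> loose_path_edge k i" "i * (k - 1) + 1 \<in> loose_path_edge k i"
  using mult_le_mono1[of "i - 1" i "k - 1"] by (auto simp: loose_path_edge_def)

lemma loose_path_edges_kgraph:
  assumes "k \<ge> 2" "n = q * (k - 1) + 1"
  shows "\<forall>e\<in>loose_path_edges k n. e \<subseteq> loose_path_vertices n \<and> card e = k"
proof
  fix e assume "e \<in> loose_path_edges k n"
  then obtain i where "i \<in> {1..q}" "e = loose_path_edge k i"
    using loose_path_edges_eq[OF assms(1)] assms(2) by blast
  then show "e \<subseteq> loose_path_vertices n \<and> card e = k"
    using loose_path_edge_subset card_loose_path_edge assms by (auto simp: loose_path_vertices_def)
qed

lemma loose_path_step_in_edge:
  assumes "k \<ge> 2" "v \<in> {1..q * (k - 1)}"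
  obtains i where "i \<in> {1..q}" "v \<in> loose_path_edge k i" "Suc v \<in> loose_path_edge k i"
proof -
  define d where "d = (v - 1) div (k - 1)"
  have "v - 1 = d * (k - 1) + (v - 1) mod (k - 1)" "(v - 1) mod (k - 1) < k - 1"
    using assms(1) unfolding d_def by (simp_all add: div_mult_mod_eq)
  then have "d * (k - 1) \<le> v - 1" "v - 1 < Suc d * (k - 1)" by simp_all linarith
  moreover have "v - 1 < q * (k - 1)" using assms(2) by auto
  then have "Suc d \<le> q" unfolding d_def by (simp add: less_mult_imp_div_less Suc_leI)
  ultimately show thesis using that[of "Suc d"] assms(2) by (auto simp: loose_path_edge_def)
qed

lemma constant_on_loose_path:
  assumes "k \<ge> 2" and const: "\<And>i u v. i \<in> {1..q} \<Longrightarrow> u \<in> loose_path_edge k i \<Longrightarrow>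
      v \<in> loose_path_edge k i \<Longrightarrow> \<phi> u = \<phi> v"
  shows "v \<in> {1..q * (k - 1) + 1} \<Longrightarrow> \<phi> v = \<phi> 1"
proof (induction v)
  case (Suc v)
  show ?case
  proof (cases "v = 0")
    case False
    then obtain i where i: "i \<in> {1..q}" "v \<in> loose_path_edge k i" "Suc v \<in> loose_path_edge k i"
      using loose_path_step_in_edge[OF assms(1), of v q] Suc.prems by auto
    have "\<phi> (Suc v) = \<phi> v" by (rule const[OF i(1,3,2)])
    also have "\<phi> v = \<phi> 1" using Suc False by simp
    finally show ?thesis .
  qed simp
qed simp

section \<open>The colouring\<close>

definition block :: "nat \<Rightarrow> nat \<Rightarrow> nat \<Rightarrow> nat \<Rightarrow> nat" where
  "block \<tau> w s v = (if v < \<tau> then 0 else if v < \<tau> + w then 1 else (v - \<tau> - w) div s + 2)"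

lemma block_eq_0_iff: "block \<tau> w s v = 0 \<longleftrightarrow> v < \<tau>"
  by (simp add: block_def)

lemma block_ge_2_subset:
  assumes "s > 0" "b \<ge> 2"
  shows "{v. block \<tau> w s v = b} \<subseteq> {\<tau> + w + (b - 2) * s ..< \<tau> + w + (b - 2) * s + s}"
proof
  fix v assume "v \<in> {v. block \<tau> w s v = b}"
  then have v: "\<tau> + w \<le> v" and r: "(v - \<tau> - w) div s = b - 2"
    using assms(2) by (auto simp: block_def split: if_splits)
  have "(v - \<tau> - w) div s * s \<le> v - \<tau> - w" "v - \<tau> - w < s + (v - \<tau> - w) div s * s"
    using assms(1) by (simp_all add: dividend_less_div_times)
  then show "v \<in> {\<tau> + w + (b - 2) * s ..< \<tau> + w + (b - 2) * s + s}"
    using v unfolding r by auto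
qed

lemma block_less:
  assumes "s > 0" "v < \<tau> + w + p * s"
  shows "block \<tau> w s v < p + 2"
proof -
  have "(v - \<tau> - w) div s < p" if "\<tau> + w \<le> v"
    using assms that by (intro less_mult_imp_div_less) simp
  then show ?thesis by (auto simp: block_def)
qed

definition red_edge :: "(nat \<Rightarrow> nat) \<Rightarrow> nat set set \<Rightarrow> nat set \<Rightarrow> bool" where
  "red_edge bl G e \<longleftrightarrow> (\<exists>b\<ge>1. \<forall>v\<in>e. bl v = b) \<or> (\<exists>g\<in>G. \<exists>x. bl x = 1 \<and> e = insert x g)"

lemma red_edge_meeting_block_0:
  assumes "red_edge bl G e" "v \<in> e" "bl v = 0"
  obtains g x where "g \<in> G" "bl x = 1" "e = insert x g"
proof -
  have "\<not> (\<exists>b\<ge>1. \<forall>v\<in>e. bl v = b)" using assms(2,3) by force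
  then show thesis using assms(1) that unfolding red_edge_def by blast
qed

locale block_colouring =
  fixes k \<tau> :: nat and bl :: "nat \<Rightarrow> nat" and G :: "nat set set"
  assumes k_ge_3: "k \<ge> 3"
    and block_0_iff: "bl y = 0 \<longleftrightarrow> y < \<tau>"
    and G_edges: "G \<subseteq> {g. g \<subseteq> {0..<\<tau>} \<and> card g = k - 1}"
begin

lemma G_subset_block_0: "g \<in> G \<Longrightarrow> g \<subseteq> {0..<\<tau>}"
  and card_G: "g \<in> G \<Longrightarrow> card g = k - 1"
  using G_edges by auto

lemma G_in_block_0: "g \<in> G \<Longrightarrow> v \<in> g \<Longrightarrow> bl v = 0"
  using G_subset_block_0 block_0_iff by (metis atLeastLessThan_iff subsetD)

lemma finite_G: "g \<in> G \<Longrightarrow> finite g"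
  using G_subset_block_0 finite_subset by blast

lemma red_edge_class:
  assumes "red_edge bl G e" "u \<in> e" "v \<in> e"
  shows "max 1 (bl u) = max 1 (bl v)"
proof -
  consider b where "\<forall>w\<in>e. bl w = b" | g x where "g \<in> G" "bl x = 1" "e = insert x g"
    using assms(1) unfolding red_edge_def by blast
  then show ?thesis
  proof cases
    case (2 g x)
    then have "max 1 (bl w) = 1" if "w \<in> e" for w
      using that G_in_block_0 by (cases "w = x") auto
    then show ?thesis using assms(2,3) by simp
  qed (use assms(2,3) in simp)
qed

lemma card_block_0_red_edge:
  assumes "red_edge bl G e"
  shows "card {v \<in> e. bl v = 0} \<le> k - 1"
proof (cases "\<exists>v\<in>e. bl v = 0")
  case True
  then obtain g x where "g \<in> G" "bl x = 1" "e = insert x g"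
    using red_edge_meeting_block_0[OF assms] by blast
  then have "{v \<in> e. bl v = 0} \<subseteq> g" by auto
  then show ?thesis using card_mono[OF finite_G[OF \<open>g \<in> G\<close>]] card_G[OF \<open>g \<in> G\<close>] by fastforce
next
  case False
  then have "card {v \<in> e. bl v = 0} = 0" by (simp add: card_eq_0_iff)
  then show ?thesis by simp
qed

end

section \<open>No red loose path\<close>

locale red_loose_path = block_colouring +
  fixes q n :: nat and f :: "nat \<Rightarrow> nat"
  assumes linear: "\<forall>g\<in>G. \<forall>g'\<in>G. g \<noteq> g' \<longrightarrow> card (g \<inter> g') \<noteq> 1"
    and q_pos: "q \<ge> 1"
    and n_eq: "n = q * (k - 1) + 1"
    and inj: "inj_on f {1..n}"
    and red: "\<And>i. i \<in> {1..q} \<Longrightarrow> red_edge bl G (f ` loose_path_edge k i)"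
begin

lemma edge_subset_vertices: "i \<in> {1..q} \<Longrightarrow> loose_path_edge k i \<subseteq> {1..n}"
  using loose_path_edge_subset n_eq by simp

text \<open>\<open>max 1 \<circ> bl\<close> merges blocks 0 and 1 into one class, and no red edge leaves a class.\<close>

lemma class_constant:
  assumes "v \<in> {1..n}"
  shows "max 1 (bl (f v)) = max 1 (bl (f 1))"
proof (rule constant_on_loose_path[OF _ _ assms[unfolded n_eq]])
  show "k \<ge> 2" using k_ge_3 by simp
  fix i u w assume "i \<in> {1..q}" "u \<in> loose_path_edge k i" "w \<in> loose_path_edge k i"
  then show "max 1 (bl (f u)) = max 1 (bl (f w))"
    using red_edge_class[OF red] by blast
qed

text \<open>Otherwise both edges at the joint have the form \<open>insert x g\<close>, and the two edges of \<open>G\<close>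
  meet exactly in the image of the joint.\<close>

lemma joint_not_in_block_0:
  assumes i: "i \<in> {1..<q}"
  shows "bl (f (i * (k - 1) + 1)) \<noteq> 0"
proof
  define s where "s = i * (k - 1) + 1"
  assume "bl (f (i * (k - 1) + 1)) = 0"
  then have s0: "bl (f s) = 0" unfolding s_def .
  have meet: "loose_path_edge k i \<inter> loose_path_edge k (Suc i) = {s}"
    using loose_path_edge_Int_Suc i unfolding s_def by simp
  have i_edges: "i \<in> {1..q}" "Suc i \<in> {1..q}" using i by auto
  obtain g x where g: "g \<in> G" "bl x = 1" "f ` loose_path_edge k i = insert x g"
    using red_edge_meeting_block_0[OF red[OF i_edges(1)], of "f s"] meet s0 by blast
  obtain g' x' where g': "g' \<in> G" "bl x' = 1" "f ` loose_path_edge k (Suc i) = insert x' g'"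
    using red_edge_meeting_block_0[OF red[OF i_edges(2)], of "f s"] meet s0 by blast
  have "s \<in> loose_path_edge k i" "s \<in> loose_path_edge k (Suc i)" using meet by auto
  then have "f s \<in> insert x g" "f s \<in> insert x' g'" using g(3) g'(3) by blast+
  moreover have "f s \<noteq> x" "f s \<noteq> x'" using s0 g(2) g'(2) by auto
  ultimately have "f s \<in> g" "f s \<in> g'" by simp_all
  moreover have "f ` loose_path_edge k i \<inter> f ` loose_path_edge k (Suc i) = {f s}"
    using inj_on_image_Int[OF inj edge_subset_vertices[OF i_edges(1)]
        edge_subset_vertices[OF i_edges(2)]] meet by simp
  ultimately have "g \<inter> g' = {f s}" using g(3) g'(3) by blast
  then have "g = g'" using linear g(1) g'(1) by fastforce
  then show False using \<open>g \<inter> g' = {f s}\<close> card_G[OF g(1)] k_ge_3 by simp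
qed

text \<open>An inner edge meeting block 0 has the form \<open>insert x g\<close>, and both of its joints lie outside
  \<open>g\<close>, so injectivity fails.\<close>

lemma block_0_in_end_edges:
  assumes v: "v \<in> {1..n}" and v0: "bl (f v) = 0"
  shows "v \<in> loose_path_edge k 1 \<union> loose_path_edge k q"
proof (cases "v = n")
  case True
  then have "v \<in> loose_path_edge k q" using loose_path_edge_ends(2)[of q k] n_eq by simp
  then show ?thesis by simp
next
  case False
  then have "v \<in> {1..q * (k - 1)}" using v n_eq by auto
  moreover have "k \<ge> 2" using k_ge_3 by simp
  ultimately obtain i where i: "i \<in> {1..q}" and vi: "v \<in> loose_path_edge k i"
    using loose_path_step_in_edge by metis
  show ?thesis
  proof (rule ccontr)
    assume "v \<notin> loose_path_edge k 1 \<union> loose_path_edge k q"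
    then have "i \<noteq> 1" "i \<noteq> q" using vi by auto
    then have inner: "i - 1 \<in> {1..<q}" "i \<in> {1..<q}" using i by auto
    define a where "a = (i - 1) * (k - 1) + 1"
    define b where "b = i * (k - 1) + 1"
    have ab: "a \<in> loose_path_edge k i" "b \<in> loose_path_edge k i"
      unfolding a_def b_def using loose_path_edge_ends i by auto
    have "(i - 1) * (k - 1) < i * (k - 1)"
      using i k_ge_3 by (intro mult_strict_right_mono) auto
    then have "a < b" unfolding a_def b_def by simp
    obtain g x where g: "g \<in> G" "bl x = 1" "f ` loose_path_edge k i = insert x g"
      by (rule red_edge_meeting_block_0[OF red[OF i] imageI[OF vi] v0])
    have "bl (f a) \<noteq> 0" "bl (f b) \<noteq> 0"
      using joint_not_in_block_0[OF inner(1)] joint_not_in_block_0[OF inner(2)]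
      unfolding a_def b_def by simp_all
    then have "f a \<notin> g" "f b \<notin> g" using G_in_block_0[OF g(1)] by auto
    moreover have "f a \<in> insert x g" "f b \<in> insert x g" using ab g(3) by blast+
    ultimately have "f a = f b" by simp
    moreover have "a \<in> {1..n}" "b \<in> {1..n}" using ab edge_subset_vertices[OF i] by auto
    ultimately show False using inj \<open>a < b\<close> unfolding inj_on_def by blast
  qed
qed

lemma card_block_0: "card {v \<in> {1..n}. bl (f v) = 0} \<le> 2 * (k - 1)"
proof -
  define Z where "Z i = {v \<in> loose_path_edge k i. bl (f v) = 0}" for i
  have finite_Z: "finite (Z i)" for i unfolding Z_def loose_path_edge_def by simp
  have card_Z: "card (Z i) \<le> k - 1" if i: "i \<in> {1..q}" for i
  proof -
    have "inj_on f (Z i)"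
      by (rule inj_on_subset[OF inj]) (use edge_subset_vertices[OF i] in \<open>auto simp: Z_def\<close>)
    then have "card (Z i) = card (f ` Z i)" by (simp add: card_image)
    also have "\<dots> \<le> card {y \<in> f ` loose_path_edge k i. bl y = 0}"
      by (rule card_mono) (auto simp: Z_def loose_path_edge_def)
    also have "\<dots> \<le> k - 1" by (rule card_block_0_red_edge[OF red[OF i]])
    finally show ?thesis .
  qed
  have "{v \<in> {1..n}. bl (f v) = 0} \<subseteq> Z 1 \<union> Z q"
    using block_0_in_end_edges unfolding Z_def by blast
  then have "card {v \<in> {1..n}. bl (f v) = 0} \<le> card (Z 1 \<union> Z q)"
    by (rule card_mono[rotated]) (simp add: finite_Z)
  also have "\<dots> \<le> card (Z 1) + card (Z q)" by (rule card_Un_le)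
  also have "\<dots> \<le> 2 * (k - 1)" using card_Z[of 1] card_Z[of q] q_pos by simp
  finally show ?thesis .
qed

lemma path_in_one_block:
  assumes "bl (f 1) \<ge> 2"
  shows "f ` {1..n} \<subseteq> {y. bl y = bl (f 1)}"
proof (rule image_subsetI)
  fix v assume "v \<in> {1..n}"
  then show "f v \<in> {y. bl y = bl (f 1)}"
    using class_constant[OF \<open>v \<in> {1..n}\<close>] assms by (simp add: max_def split: if_splits)
qed

lemma path_in_blocks_0_1:
  assumes "bl (f 1) \<le> 1" "finite {y. bl y = 1}"
  shows "n \<le> 2 * (k - 1) + card {y. bl y = 1}"
proof -
  define Z where "Z = {v \<in> {1..n}. bl (f v) = 0}"
  define W where "W = {v \<in> {1..n}. bl (f v) \<noteq> 0}"
  have "f ` W \<subseteq> {y. bl y = 1}"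
  proof (rule image_subsetI)
    fix v assume "v \<in> W"
    then have "v \<in> {1..n}" "bl (f v) \<noteq> 0" by (simp_all add: W_def)
    then show "f v \<in> {y. bl y = 1}"
      using class_constant[OF \<open>v \<in> {1..n}\<close>] assms(1) by (simp add: max_def split: if_splits)
  qed
  then have "card (f ` W) \<le> card {y. bl y = 1}" by (rule card_mono[OF assms(2)])
  moreover have "inj_on f W" by (rule inj_on_subset[OF inj]) (auto simp: W_def)
  ultimately have "card W \<le> card {y. bl y = 1}" by (simp add: card_image)
  moreover have "card Z \<le> 2 * (k - 1)" unfolding Z_def by (rule card_block_0)
  moreover have "card (Z \<union> W) = card Z + card W"
    by (rule card_Un_disjoint) (auto simp: Z_def W_def)
  moreover have "Z \<union> W = {1..n}" by (auto simp: Z_def W_def)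
  ultimately show ?thesis by simp
qed

end

lemma no_red_loose_path:
  assumes k: "k \<ge> 3" and n: "n = q * (k - 1) + 1" "2 * k \<le> n + 1"
    and G: "G \<subseteq> {g. g \<subseteq> {0..<\<tau>} \<and> card g = k - 1}"
    and linear: "\<forall>g\<in>G. \<forall>g'\<in>G. g \<noteq> g' \<longrightarrow> card (g \<inter> g') \<noteq> 1"
  shows "\<not> has_copy (loose_path_vertices n) (loose_path_edges k n) {0..<N}
           {e \<in> complete_kgraph_edges k N. red_edge (block \<tau> (n + 1 - 2 * k) (n - 1)) G e}"
proof
  define bl where "bl = block \<tau> (n + 1 - 2 * k) (n - 1)"
  assume "has_copy (loose_path_vertices n) (loose_path_edges k n) {0..<N}
           {e \<in> complete_kgraph_edges k N. red_edge bl G e}"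
  then obtain f where f_inj: "inj_on f {1..n}"
    and f_red: "\<And>e. e \<in> loose_path_edges k n \<Longrightarrow> red_edge bl G (f ` e)"
    unfolding has_copy_def loose_path_vertices_def by auto
  have "q \<ge> 1" using n k by (cases q) auto
  interpret red_loose_path k \<tau> bl G q n f
  proof
    show "bl y = 0 \<longleftrightarrow> y < \<tau>" for y unfolding bl_def by (rule block_eq_0_iff)
    show "red_edge bl G (f ` loose_path_edge k i)" if "i \<in> {1..q}" for i
      using f_red loose_path_edges_eq[of k q] k n(1) that by auto
  qed (use k G linear \<open>q \<ge> 1\<close> f_inj n(1) in auto)
  show False
  proof (cases "bl (f 1) \<ge> 2")
    case True
    have "n - 1 > 0" using n(2) k by simp
    from block_ge_2_subset[OF this True[unfolded bl_def]]
    obtain a where sub: "{y. bl y = bl (f 1)} \<subseteq> {a..<a + (n - 1)}" unfolding bl_def by blast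
    have "card (f ` {1..n}) \<le> card {y. bl y = bl (f 1)}"
      by (rule card_mono[OF finite_subset[OF sub finite_atLeastLessThan] path_in_one_block[OF True]])
    also have "\<dots> \<le> n - 1" using card_mono[OF finite_atLeastLessThan sub] by simp
    finally show False using card_image[OF f_inj] n(2) k by simp
  next
    case False
    have "{y. bl y = 1} = {\<tau>..<\<tau> + (n + 1 - 2 * k)}" unfolding bl_def by (auto simp: block_def)
    then have "n \<le> 2 * (k - 1) + (n + 1 - 2 * k)" using path_in_blocks_0_1 False by simp
    then show False using n(2) k by simp
  qed
qed

section \<open>No blue copy of H\<close>

definition H_vertices :: "(nat \<Rightarrow> 'a set) \<Rightarrow> nat \<Rightarrow> 'a set" where
  "H_vertices A \<chi> = (\<Union>i\<in>{1..\<chi>}. A i)"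

definition H_edges :: "nat \<Rightarrow> (nat \<Rightarrow> 'a set) \<Rightarrow> nat \<Rightarrow> 'a set set" where
  "H_edges k A \<chi> = {e. e \<subseteq> H_vertices A \<chi> \<and> card e = k \<and> (\<exists>i\<in>{1..\<chi>}. card (e \<inter> A i) = k - 1)}"

lemma finite_H_vertices: "\<forall>i\<in>{1..\<chi>}. finite (A i) \<Longrightarrow> finite (H_vertices A \<chi>)"
  by (simp add: H_vertices_def)

lemma H_edges_kgraph: "\<forall>e\<in>H_edges k A \<chi>. e \<subseteq> H_vertices A \<chi> \<and> card e = k"
  by (simp add: H_edges_def)

lemma insert_in_H_edges:
  assumes "i \<in> {1..\<chi>}" "S \<subseteq> A i" "finite S" "card S = k - 1" "k \<ge> 1"
    and "u \<in> H_vertices A \<chi>" "u \<notin> A i"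
  shows "insert u S \<in> H_edges k A \<chi>"
proof -
  have "insert u S \<inter> A i = S" using assms(2,7) by blast
  then have "card (insert u S \<inter> A i) = k - 1" using assms(4) by simp
  moreover have "u \<notin> S" using assms(2,7) by blast
  then have "card (insert u S) = k" using assms(3-5) by simp
  moreover have "insert u S \<subseteq> H_vertices A \<chi>" using assms(1,2,6) unfolding H_vertices_def by blast
  ultimately show ?thesis using assms(1) unfolding H_edges_def by blast
qed

locale blue_H_copy = block_colouring +
  fixes A :: "nat \<Rightarrow> 'a set" and \<chi> N :: nat and f :: "'a \<Rightarrow> nat"
  assumes two_le_chi: "\<chi> \<ge> 2"
    and finite_parts: "\<And>i. i \<in> {1..\<chi>} \<Longrightarrow> finite (A i)"
    and disjoint_parts: "\<And>i j. i \<in> {1..\<chi>} \<Longrightarrow> j \<in> {1..\<chi>} \<Longrightarrow> i \<noteq> j \<Longrightarrow> A i \<inter> A j = {}"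
    and large_parts: "\<And>i. i \<in> {1..\<chi> - 1} \<Longrightarrow> (\<chi> - 1) * (k - 2) + \<tau> < card (A i)"
    and blocks_below: "\<And>y. y < N \<Longrightarrow> bl y < \<chi>"
    and inj: "inj_on f (H_vertices A \<chi>)"
    and maps_into: "f ` H_vertices A \<chi> \<subseteq> {0..<N}"
    and blue: "\<And>e. e \<in> H_edges k A \<chi> \<Longrightarrow> \<not> red_edge bl G (f ` e)"
begin

lemma part_subset: "i \<in> {1..\<chi>} \<Longrightarrow> A i \<subseteq> H_vertices A \<chi>"
  by (auto simp: H_vertices_def)

lemma card_image_f: "S \<subseteq> H_vertices A \<chi> \<Longrightarrow> card (f ` S) = card S"
  using card_image inj_on_subset[OF inj] by blast

lemma block_less_chi: "v \<in> H_vertices A \<chi> \<Longrightarrow> bl (f v) < \<chi>"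
  using maps_into blocks_below by auto

lemma other_parts_avoid_block:
  assumes i: "i \<in> {1..\<chi>}" and S: "S \<subseteq> A i" "card S = k - 1" "\<forall>v\<in>S. bl (f v) = b" and "b \<ge> 1"
    and u: "u \<in> H_vertices A \<chi>" "u \<notin> A i"
  shows "bl (f u) \<noteq> b"
proof
  assume "bl (f u) = b"
  then have "red_edge bl G (f ` insert u S)"
    using S(3) \<open>b \<ge> 1\<close> unfolding red_edge_def by auto
  moreover have "insert u S \<in> H_edges k A \<chi>"
    using insert_in_H_edges[OF i S(1) finite_subset[OF S(1) finite_parts[OF i]] S(2) _ u] k_ge_3
    by simp
  ultimately show False using blue by blast
qed

lemma monochromatic_part:
  assumes i: "i \<in> {1..\<chi> - 1}"
  obtains b S where "b \<in> {1..\<chi> - 1}" "S \<subseteq> A i" "card S = k - 1" "\<forall>v\<in>S. bl (f v) = b"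
proof -
  have i': "i \<in> {1..\<chi>}" using i by auto
  define Y where "Y = {v \<in> A i. bl (f v) \<noteq> 0}"
  define Z where "Z = {v \<in> A i. bl (f v) = 0}"
  have "Z \<subseteq> H_vertices A \<chi>" using part_subset[OF i'] by (auto simp: Z_def)
  then have "card Z = card (f ` Z)" by (simp add: card_image_f)
  also have "\<dots> \<le> card {0..<\<tau>}"
    by (rule card_mono) (auto simp: Z_def block_0_iff)
  finally have "card Z \<le> \<tau>" by simp
  moreover have "card (A i) = card Y + card Z"
  proof -
    have "finite Y" "finite Z" "Y \<inter> Z = {}" using finite_parts[OF i'] by (auto simp: Y_def Z_def)
    then have "card (Y \<union> Z) = card Y + card Z" by (rule card_Un_disjoint)
    moreover have "Y \<union> Z = A i" by (auto simp: Y_def Z_def)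
    ultimately show ?thesis by simp
  qed
  ultimately have large: "(\<chi> - 1) * (k - 2) < card Y" using large_parts[OF i] by simp
  have maps: "(\<lambda>v. bl (f v)) \<in> Y \<rightarrow> {1..\<chi> - 1}"
  proof
    fix v assume "v \<in> Y"
    then have "bl (f v) \<noteq> 0" "bl (f v) < \<chi>"
      using block_less_chi part_subset[OF i'] by (auto simp: Y_def)
    then show "bl (f v) \<in> {1..\<chi> - 1}" by simp
  qed
  have "finite Y" using finite_parts[OF i'] by (simp add: Y_def)
  then obtain b where b: "b \<in> {1..\<chi> - 1}" and "k - 2 < card {v \<in> Y. bl (f v) = b}"
    by (rule pigeonhole_large_fibre[OF _ maps large])
  then have "k - 1 \<le> card {v \<in> Y. bl (f v) = b}" using k_ge_3 by simp
  then obtain S where "S \<subseteq> {v \<in> Y. bl (f v) = b}" "card S = k - 1"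
    by (rule obtain_subset_with_card_n)
  then show thesis using that[OF b] by (auto simp: Y_def)
qed

lemma part_blocks:
  obtains \<beta> S where "\<beta> ` {1..\<chi> - 1} = {1..\<chi> - 1}"
    and "\<forall>i\<in>{1..\<chi> - 1}. S i \<subseteq> A i \<and> card (S i) = k - 1 \<and> (\<forall>v\<in>S i. bl (f v) = \<beta> i)"
proof -
  have "\<forall>i\<in>{1..\<chi> - 1}. \<exists>b S. b \<in> {1..\<chi> - 1} \<and> S \<subseteq> A i \<and> card S = k - 1 \<and> (\<forall>v\<in>S. bl (f v) = b)"
  proof
    fix i assume "i \<in> {1..\<chi> - 1}"
    then obtain b S where "b \<in> {1..\<chi> - 1}" "S \<subseteq> A i" "card S = k - 1" "\<forall>v\<in>S. bl (f v) = b"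
      by (rule monochromatic_part)
    then show "\<exists>b S. b \<in> {1..\<chi> - 1} \<and> S \<subseteq> A i \<and> card S = k - 1 \<and> (\<forall>v\<in>S. bl (f v) = b)"
      by blast
  qed
  from bchoice[OF this] obtain \<beta> where "\<forall>i\<in>{1..\<chi> - 1}. \<exists>S. \<beta> i \<in> {1..\<chi> - 1} \<and> S \<subseteq> A i \<and> card S = k - 1 \<and>
      (\<forall>v\<in>S. bl (f v) = \<beta> i)"
    by blast
  from bchoice[OF this] obtain S where \<beta>S: "\<And>i. i \<in> {1..\<chi> - 1} \<Longrightarrow> \<beta> i \<in> {1..\<chi> - 1} \<and> S i \<subseteq> A i \<and>
      card (S i) = k - 1 \<and> (\<forall>v\<in>S i. bl (f v) = \<beta> i)"
    by blast
  have "inj_on \<beta> {1..\<chi> - 1}"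
  proof (rule inj_onI, rule ccontr)
    fix i j assume i: "i \<in> {1..\<chi> - 1}" and j: "j \<in> {1..\<chi> - 1}" and "\<beta> i = \<beta> j" "i \<noteq> j"
    have i': "i \<in> {1..\<chi>}" and j': "j \<in> {1..\<chi>}" using i j by auto
    have Si: "S i \<subseteq> A i" "card (S i) = k - 1" "\<forall>v\<in>S i. bl (f v) = \<beta> i" "\<beta> i \<ge> 1"
      using \<beta>S[OF i] by auto
    have "S j \<noteq> {}" using \<beta>S[OF j] k_ge_3 by auto
    then obtain u where u: "u \<in> S j" by blast
    then have "u \<in> A j" "bl (f u) = \<beta> i" using \<beta>S[OF j] \<open>\<beta> i = \<beta> j\<close> by auto
    moreover have "u \<in> H_vertices A \<chi>" using part_subset[OF j'] \<open>u \<in> A j\<close> by blast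
    moreover have "u \<notin> A i" using disjoint_parts[OF i' j' \<open>i \<noteq> j\<close>] \<open>u \<in> A j\<close> by blast
    ultimately show False using other_parts_avoid_block[OF i' Si] by blast
  qed
  then have surj: "\<beta> ` {1..\<chi> - 1} = {1..\<chi> - 1}"
    using \<beta>S by (intro endo_inj_surj) auto
  moreover have "\<forall>i\<in>{1..\<chi> - 1}. S i \<subseteq> A i \<and> card (S i) = k - 1 \<and> (\<forall>v\<in>S i. bl (f v) = \<beta> i)"
    using \<beta>S by blast
  ultimately show thesis by (rule that)
qed

lemma last_part_in_block_0:
  assumes u: "u \<in> A \<chi>"
  shows "bl (f u) = 0"
proof (rule ccontr)
  assume "bl (f u) \<noteq> 0"
  obtain \<beta> S where surj: "\<beta> ` {1..\<chi> - 1} = {1..\<chi> - 1}"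
    and \<beta>S: "\<forall>i\<in>{1..\<chi> - 1}. S i \<subseteq> A i \<and> card (S i) = k - 1 \<and> (\<forall>v\<in>S i. bl (f v) = \<beta> i)"
    by (rule part_blocks)
  have \<chi>: "\<chi> \<in> {1..\<chi>}" using two_le_chi by simp
  have uH: "u \<in> H_vertices A \<chi>" using part_subset[OF \<chi>] u by blast
  have "bl (f u) < \<chi>" by (rule block_less_chi[OF uH])
  then have "bl (f u) \<in> \<beta> ` {1..\<chi> - 1}" using \<open>bl (f u) \<noteq> 0\<close> surj by simp
  then obtain i where i: "i \<in> {1..\<chi> - 1}" and "bl (f u) = \<beta> i" by (rule imageE)
  have Si: "S i \<subseteq> A i" "card (S i) = k - 1" "\<forall>v\<in>S i. bl (f v) = \<beta> i"
    using \<beta>S i by auto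
  have "\<beta> i \<in> {1..\<chi> - 1}" using surj i by blast
  then have "\<beta> i \<ge> 1" by simp
  have i': "i \<in> {1..\<chi>}" "i \<noteq> \<chi>" using i by auto
  then have "u \<notin> A i" using disjoint_parts[OF i'(1) \<chi> i'(2)] u by blast
  from other_parts_avoid_block[OF i'(1) Si \<open>\<beta> i \<ge> 1\<close> uH this] \<open>bl (f u) = \<beta> i\<close>
  show False by simp
qed

lemma last_part_image_contains_no_G_edge:
  assumes g: "g \<in> G"
  shows "\<not> g \<subseteq> f ` A \<chi>"
proof
  assume "g \<subseteq> f ` A \<chi>"
  obtain \<beta> S where surj: "\<beta> ` {1..\<chi> - 1} = {1..\<chi> - 1}"
    and \<beta>S: "\<forall>i\<in>{1..\<chi> - 1}. S i \<subseteq> A i \<and> card (S i) = k - 1 \<and> (\<forall>v\<in>S i. bl (f v) = \<beta> i)"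
    by (rule part_blocks)
  have \<chi>: "\<chi> \<in> {1..\<chi>}" using two_le_chi by simp
  have "1 \<in> \<beta> ` {1..\<chi> - 1}" using surj two_le_chi by simp
  then obtain i where i: "i \<in> {1..\<chi> - 1}" and "1 = \<beta> i" by (rule imageE)
  have i': "i \<in> {1..\<chi>}" "i \<noteq> \<chi>" using i by auto
  have Si: "S i \<subseteq> A i" "card (S i) = k - 1" "\<forall>v\<in>S i. bl (f v) = \<beta> i"
    using \<beta>S i by auto
  then have "S i \<noteq> {}" using k_ge_3 by auto
  then obtain u where u: "u \<in> S i" by blast
  then have "u \<in> A i" "bl (f u) = 1" using Si \<open>1 = \<beta> i\<close> by auto
  then have uH: "u \<in> H_vertices A \<chi>" and "u \<notin> A \<chi>"
    using part_subset[OF i'(1)] disjoint_parts[OF i'(1) \<chi> i'(2)] by auto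
  define D where "D = {a \<in> A \<chi>. f a \<in> g}"
  have "D \<subseteq> A \<chi>" by (auto simp: D_def)
  have "f ` D = g" using \<open>g \<subseteq> f ` A \<chi>\<close> by (auto simp: D_def)
  have "card D = card (f ` D)" using card_image_f \<open>D \<subseteq> A \<chi>\<close> part_subset[OF \<chi>] by simp
  also have "\<dots> = k - 1" using \<open>f ` D = g\<close> card_G[OF g] by simp
  finally have "card D = k - 1" .
  have "finite D" using finite_parts[OF \<chi>] \<open>D \<subseteq> A \<chi>\<close> finite_subset by blast
  have "insert u D \<in> H_edges k A \<chi>"
    by (rule insert_in_H_edges[OF \<chi> \<open>D \<subseteq> A \<chi>\<close> \<open>finite D\<close> \<open>card D = k - 1\<close> _ uH \<open>u \<notin> A \<chi>\<close>])
      (use k_ge_3 in simp)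
  moreover have "f ` insert u D = insert (f u) g" using \<open>f ` D = g\<close> by simp
  then have "red_edge bl G (f ` insert u D)"
    unfolding red_edge_def using g \<open>bl (f u) = 1\<close> by blast
  ultimately show False using blue by blast
qed

end

lemma no_blue_H_copy:
  fixes A :: "nat \<Rightarrow> 'a set"
  assumes k: "k \<ge> 3" and \<chi>: "\<chi> \<ge> 2" and s: "s > 0"
    and "\<forall>i\<in>{1..\<chi>}. finite (A i)"
    and "\<forall>i\<in>{1..\<chi>}. \<forall>j\<in>{1..\<chi>}. i \<noteq> j \<longrightarrow> A i \<inter> A j = {}"
    and "\<forall>i\<in>{1..\<chi> - 1}. card (A i) > (\<chi> - 1) * (k - 2) + \<tau>"
    and "card (A \<chi>) = t"
    and G: "G \<subseteq> {g. g \<subseteq> {0..<\<tau>} \<and> card g = k - 1}"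
    and "\<forall>I. I \<subseteq> {0..<\<tau>} \<and> (\<forall>g\<in>G. \<not> g \<subseteq> I) \<longrightarrow> card I < t"
  shows "\<not> has_copy (H_vertices A \<chi>) (H_edges k A \<chi>) {0..<\<tau> + w + (\<chi> - 2) * s}
           {e \<in> complete_kgraph_edges k (\<tau> + w + (\<chi> - 2) * s). \<not> red_edge (block \<tau> w s) G e}"
proof
  assume "has_copy (H_vertices A \<chi>) (H_edges k A \<chi>) {0..<\<tau> + w + (\<chi> - 2) * s}
           {e \<in> complete_kgraph_edges k (\<tau> + w + (\<chi> - 2) * s). \<not> red_edge (block \<tau> w s) G e}"
  then obtain f where "inj_on f (H_vertices A \<chi>)" "f ` H_vertices A \<chi> \<subseteq> {0..<\<tau> + w + (\<chi> - 2) * s}"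
    "\<And>e. e \<in> H_edges k A \<chi> \<Longrightarrow> \<not> red_edge (block \<tau> w s) G (f ` e)"
    unfolding has_copy_def by auto
  moreover have "block \<tau> w s y < \<chi>" if "y < \<tau> + w + (\<chi> - 2) * s" for y
    using block_less[OF s that] \<chi> by simp
  ultimately interpret blue_H_copy k \<tau> "block \<tau> w s" G A \<chi> "\<tau> + w + (\<chi> - 2) * s" f
    using assms by unfold_locales (auto simp: block_eq_0_iff)
  have \<chi>: "\<chi> \<in> {1..\<chi>}" using \<chi> by simp
  have "f ` A \<chi> \<subseteq> {0..<\<tau>}"
    using last_part_in_block_0 by (auto simp: block_eq_0_iff)
  moreover have "card (f ` A \<chi>) = t"
    using card_image_f[OF part_subset[OF \<chi>]] assms(7) by simp
  ultimately have "\<not> (\<forall>g\<in>G. \<not> g \<subseteq> f ` A \<chi>)" using assms(9) by auto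
  then show False using last_part_image_contains_no_G_edge by blast
qed

theorem proposition1p8:
  fixes k \<chi> t n :: nat and A :: "nat \<Rightarrow> 'a set"
  assumes "k \<ge> 3" and "\<chi> \<ge> 2" and "t \<ge> k - 1" and "n \<ge> 3 * (k - 1)"
    and "n mod (k - 1) = 1 mod (k - 1)"
    and "\<forall>i\<in>{1..\<chi>}. finite (A i)"
    and "\<forall>i\<in>{1..\<chi>}. \<forall>j\<in>{1..\<chi>}. i \<noteq> j \<longrightarrow> A i \<inter> A j = {}"
    and "\<forall>i\<in>{1..\<chi> - 1}. card (A i) > (\<chi> - 1) * (k - 2) + tau (k - 1) t"
    and "card (A \<chi>) = t"
  shows "int (ramsey_number k (loose_path_vertices n) (loose_path_edges k n)
              (\<Union>i\<in>{1..\<chi>}. A i)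
              {e. e \<subseteq> (\<Union>i\<in>{1..\<chi>}. A i) \<and> card e = k \<and>
                  (\<exists>i\<in>{1..\<chi>}. card (e \<inter> A i) = k - 1)})
         \<ge> int (\<chi> - 1) * (int n - 1) + int (tau (k - 1) t) - 2 * int k + 3"
proof -
  define \<tau> where "\<tau> = tau (k - 1) t"
  have "n mod (k - 1) = 1" using assms(1,5) by simp
  then have n: "n = n div (k - 1) * (k - 1) + 1" using div_mult_mod_eq[of n "k - 1"] by simp
  have "k - 1 \<ge> 2" "t \<ge> 1" "2 * k \<le> n + 1" "n - 1 > 0" using assms(1,3,4) by auto
  obtain G where G: "G \<subseteq> {g. g \<subseteq> {0..<\<tau>} \<and> card g = k - 1}"
    "\<forall>I. I \<subseteq> {0..<\<tau>} \<and> (\<forall>g\<in>G. \<not> g \<subseteq> I) \<longrightarrow> card I < t"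
    "\<forall>g\<in>G. \<forall>g'\<in>G. g \<noteq> g' \<longrightarrow> card (g \<inter> g') \<noteq> 1"
    unfolding \<tau>_def by (rule tau_attained[OF \<open>k - 1 \<ge> 2\<close> \<open>t \<ge> 1\<close>])
  note no_red = no_red_loose_path[OF assms(1) n \<open>2 * k \<le> n + 1\<close> G(1,3)]
  note no_blue = no_blue_H_copy[OF assms(1,2) \<open>n - 1 > 0\<close> assms(6,7) assms(8)[folded \<tau>_def] assms(9) G(1,2)]
  have "\<tau> + (n + 1 - 2 * k) + (\<chi> - 2) * (n - 1)
      < ramsey_number k (loose_path_vertices n) (loose_path_edges k n) (H_vertices A \<chi>) (H_edges k A \<chi>)"
    by (rule less_ramsey_number[OF _ loose_path_edges_kgraph[OF _ n] finite_H_vertices[OF assms(6)]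
          H_edges_kgraph no_red no_blue])
      (use assms(1) in \<open>simp_all add: loose_path_vertices_def\<close>)
  moreover have "int (\<tau> + (n + 1 - 2 * k) + (\<chi> - 2) * (n - 1))
      = int \<tau> + int n + 1 - 2 * int k + (int \<chi> - 2) * (int n - 1)"
    using assms(1,2,4) by (simp add: of_nat_diff)
  ultimately show ?thesis
    using assms(2) by (simp add: H_vertices_def H_edges_def \<tau>_def of_nat_diff algebra_simps)
qed

end
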